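(* Let $N = q^k n^2$ be an odd perfect number given in Eulerian form. Then $$I(n) > \left(\frac{8}{5}\right)^{\frac{\ln(4/3)}{\ln(13/9)}} \approx 1.44440557.$$
   Context: For a positive integer $x$, $\sigma(x)$ denotes the sum of the positive divisors of $x$, and $I(x) = \sigma(x)/x$ is the abundancy index. A positive integer $N$ is perfect if $\sigma(N) = 2N$. An odd perfect number $N$ is said to be given in Eulerian form if $N = q^k n^2$ where $q$ is a prime, $q \equiv k \equiv 1 \pmod 4$, $n$ is a positive integer, and $\gcd(q,n) = 1$. *)

theory Defs
  imports "HOL-Analysis.Analysis" "HOL-Computational_Algebra.Primes"
begin

definition sigma :: "nat \<Rightarrow> nat" where
  "sigma x = (\<Sum>d | d dvd x. d)"

definition abundancy :: "nat \<Rightarrow> real" where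
  "abundancy x = real (sigma x) / real x"

definition perfect :: "nat \<Rightarrow> bool" where
  "perfect N \<longleftrightarrow> N > 0 \<and> sigma N = 2 * N"

definition eulerian_form :: "nat \<Rightarrow> nat \<Rightarrow> nat \<Rightarrow> nat \<Rightarrow> bool" where
  "eulerian_form N q k n \<longleftrightarrow>
     N = q ^ k * n ^ 2 \<and> prime q \<and> q mod 4 = 1 \<and> k mod 4 = 1 \<and> n > 0 \<and> coprime q n"

end

theory Submission
  imports Defs
begin

text \<open>
  Since \<open>q \<ge> 5\<close>, \<open>I(q\<^sup>k) < q/(q - 1) \<le> 5/4\<close>, so \<open>I(n\<^sup>2) = 2 / I(q\<^sup>k) > 8/5\<close>. On the other
  hand \<open>I(n\<^sup>2) \<le> I(n)\<^sup>c\<close> with \<open>c = ln(13/9) / ln(4/3)\<close> for every odd \<open>n\<close>: by multiplicativity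
  it suffices to treat an odd prime power \<open>P = p\<^sup>a\<close>, where
  \<open>I(P\<^sup>2) - 1 = (1 + 1/P)(I(P) - 1)\<close>. For \<open>P \<ge> 5\<close> the factor \<open>1 + 1/P \<le> 6/5 \<le> c\<close>, and
  Bernoulli's inequality \<open>1 + c(x - 1) \<le> x\<^sup>c\<close> finishes; the remaining case \<open>P = 3\<close> is the
  equality case \<open>I(9) = 13/9 = (4/3)\<^sup>c = I(3)\<^sup>c\<close> that determines \<open>c\<close>.
\<close>

lemma powr_ge_one_plus_mult:
  fixes x c :: real
  assumes "x \<ge> 1" "c \<ge> 1"
  shows "1 + c * (x - 1) \<le> x powr c"
proof -
  have "x powr c - 1 powr c \<ge> (c * 1 powr (c - 1)) * (x - 1)"
  proof (rule convex_on_imp_above_tangent[where A = "{0<..}"])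
    show "convex_on {0<..} (\<lambda>x. x powr c)" using powr_convex assms by blast
    show "((\<lambda>x. x powr c) has_field_derivative c * 1 powr (c - 1)) (at 1 within {0<..})"
      by (rule has_field_derivative_at_within, rule has_real_derivative_powr) simp
  qed (use assms in \<open>simp_all add: interior_open\<close>)
  then show ?thesis by simp
qed

lemma sigma_mult:
  assumes "coprime a b" "a > 0" "b > 0"
  shows "sigma (a * b) = sigma a * sigma b"
proof -
  let ?A = "{d. d dvd a}" and ?B = "{d. d dvd b}"
  let ?mult = "\<lambda>z. fst z * snd z"
  have inj: "inj_on ?mult (?A \<times> ?B)"
  proof (rule inj_onI, clarify)
    fix d1 d2 e1 e2 :: nat
    assume d: "d1 dvd a" "d2 dvd b" "e1 dvd a" "e2 dvd b"
      and "?mult (d1, d2) = ?mult (e1, e2)"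
    then have eq: "d1 * d2 = e1 * e2" by simp
    have "gcd (d1 * d2) a = d1" "gcd (e1 * e2) a = e1"
      using gcd_mult_left_right_cancel[OF coprime_divisors[OF dvd_refl d(2) assms(1)], of d1]
        gcd_mult_left_right_cancel[OF coprime_divisors[OF dvd_refl d(4) assms(1)], of e1] d
      by (simp_all add: gcd_nat.absorb1)
    then have "d1 = e1" using eq by simp
    moreover have "d1 > 0" using d(1) assms(2) by (auto intro: gr0I)
    ultimately show "d1 = e1 \<and> d2 = e2" using eq by simp
  qed
  have img: "?mult ` (?A \<times> ?B) = {d. d dvd a * b}"
  proof (rule set_eqI, rule iffI)
    fix d assume "d \<in> {d. d dvd a * b}"
    then obtain d1 d2 where "d = d1 * d2" "d1 dvd a" "d2 dvd b"
      using division_decomp by blast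
    then show "d \<in> ?mult ` (?A \<times> ?B)"
      by (intro image_eqI[of _ _ "(d1, d2)"]) auto
  qed (auto intro: mult_dvd_mono)
  have "sigma a * sigma b = (\<Sum>z\<in>?A \<times> ?B. ?mult z)"
    unfolding sigma_def by (simp add: sum_product sum.cartesian_product case_prod_beta)
  also have "\<dots> = (\<Sum>d\<in>?mult ` (?A \<times> ?B). d)"
    using sum.reindex[OF inj, of id] by simp
  finally show ?thesis unfolding sigma_def img by simp
qed

lemma abundancy_mult:
  assumes "coprime a b" "a > 0" "b > 0"
  shows "abundancy (a * b) = abundancy a * abundancy b"
  unfolding abundancy_def using sigma_mult[OF assms] by simp

lemma abundancy_ge_1:
  assumes "n > 0"
  shows "abundancy n \<ge> 1"
proof -
  have "n \<le> sigma n" unfolding sigma_def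
    by (rule member_le_sum) (use assms in auto)
  then show ?thesis unfolding abundancy_def using assms by simp
qed

lemma sigma_prime_power:
  assumes "prime p"
  shows "sigma (p ^ a) = (\<Sum>i\<le>a. p ^ i)"
proof -
  have "{d. d dvd p ^ a} = (\<lambda>i. p ^ i) ` {..a}"
    using divides_primepow_nat[OF assms] by auto
  moreover have "inj_on (\<lambda>i. p ^ i) {..a}"
    using assms prime_gt_1_nat by (auto intro!: inj_onI simp: power_inject_exp)
  ultimately show ?thesis unfolding sigma_def by (simp add: sum.reindex)
qed

lemma abundancy_prime_power:
  assumes "prime p"
  shows "abundancy (p ^ a) = (real p * real p ^ a - 1) / (real p ^ a * (real p - 1))"
proof -
  have p1: "real p > 1" using prime_gt_1_nat[OF assms] by simp
  have "real (sigma (p ^ a)) = (\<Sum>i<Suc a. real p ^ i)"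
    using sigma_prime_power[OF assms] by (simp add: lessThan_Suc_atMost)
  also have "\<dots> = (real p * real p ^ a - 1) / (real p - 1)"
    using geometric_sum[of "real p" "Suc a"] p1 by simp
  finally show ?thesis
    unfolding abundancy_def by (simp add: divide_divide_eq_left mult.commute)
qed

lemma abundancy_prime_power_less:
  assumes "prime p"
  shows "abundancy (p ^ a) < real p / (real p - 1)"
proof -
  have "real p > 1" "real p ^ a \<ge> 1" using prime_gt_1_nat[OF assms] by simp_all
  then show ?thesis unfolding abundancy_prime_power[OF assms] by (simp add: field_simps)
qed

lemma abundancy_prime_power_double:
  assumes "prime p"
  shows "abundancy (p ^ (2 * a)) = 1 + (1 + 1 / real p ^ a) * (abundancy (p ^ a) - 1)"
proof -
  have "real p > 1" "real p ^ a > 0" using prime_gt_1_nat[OF assms] by simp_all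
  then show ?thesis
    unfolding abundancy_prime_power[OF assms]
    by (simp add: power_mult mult.commute field_simps power2_eq_square)
qed

definition square_exponent :: real where
  "square_exponent = ln (13/9) / ln (4/3)"

lemma square_exponent_ge: "square_exponent \<ge> 6/5"
proof -
  have "ln ((4/3::real) ^ 6) \<le> ln ((13/9) ^ 5)"
    by (subst ln_le_cancel_iff; simp add: power_divide)
  then have "6 * ln (4/3::real) \<le> 5 * ln (13/9)"
    by (simp add: ln_realpow)
  then show ?thesis unfolding square_exponent_def by (simp add: field_simps)
qed

lemma powr_square_exponent: "(4/3 :: real) powr square_exponent = 13/9"
  unfolding square_exponent_def powr_def by simp

lemma abundancy_prime_power_square_le:
  assumes "prime p" "odd p"
  shows "abundancy (p ^ (2 * a)) \<le> abundancy (p ^ a) powr square_exponent"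
proof -
  have p3: "p \<ge> 3" using prime_ge_2_nat[OF assms(1)] assms(2) by (cases "p = 2") auto
  consider "a = 0" | "p = 3" "a = 1" | "p ^ a \<ge> 5"
  proof -
    have "p ^ a \<ge> 5" if "a \<noteq> 0" "\<not> (p = 3 \<and> a = 1)"
    proof (cases "p = 3")
      case True
      with that have "a \<ge> 2" by simp
      then show ?thesis using True power_increasing[of 2 a "3::nat"] by simp
    next
      case False
      then have "p \<ge> 5" using p3 assms(2) by presburger
      moreover have "p \<le> p ^ a" using that(1) p3 by (simp add: self_le_power)
      ultimately show ?thesis by simp
    qed
    then show thesis using that by blast
  qed
  then show ?thesis
  proof cases
    case 1
    then show ?thesis by (simp add: abundancy_def sigma_def)
  next
    case 2
    have "abundancy (p ^ (2 * a)) = 13/9" "abundancy (p ^ a) = 4/3"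
      using 2 abundancy_prime_power[of 3 2] abundancy_prime_power[of 3 1] by simp_all
    then show ?thesis by (simp only: powr_square_exponent order_refl)
  next
    case 3
    let ?x = "abundancy (p ^ a)"
    have x1: "?x \<ge> 1" using abundancy_ge_1 assms(1) prime_gt_0_nat by simp
    have "real p ^ a \<ge> 5" using 3 by (metis of_nat_le_iff of_nat_numeral of_nat_power)
    then have "1 / real p ^ a \<le> 1 / 5" by (simp add: divide_simps)
    then have "1 + 1 / real p ^ a \<le> square_exponent"
      using square_exponent_ge by linarith
    then have "abundancy (p ^ (2 * a)) \<le> 1 + square_exponent * (?x - 1)"
      unfolding abundancy_prime_power_double[OF assms(1)] using x1 by (simp add: mult_right_mono)
    also have "\<dots> \<le> ?x powr square_exponent"
      using powr_ge_one_plus_mult x1 square_exponent_ge by simp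
    finally show ?thesis .
  qed
qed

lemma abundancy_square_le:
  fixes n :: nat
  assumes "n > 0" "odd n"
  shows "abundancy (n ^ 2) \<le> abundancy n powr square_exponent"
  using assms
proof (induction n rule: less_induct)
  case (less n)
  show ?case
  proof (cases "n = 1")
    case True
    then show ?thesis by (simp add: abundancy_def sigma_def)
  next
    case False
    obtain p where p: "prime p" "p dvd n" using False prime_factor_nat by blast
    define a where "a = multiplicity p n"
    obtain m where m: "n = p ^ a * m" "\<not> p dvd m"
      using multiplicity_decompose'[of n p] less.prems p unfolding a_def
      by (metis not_prime_unit neq0_conv)
    have "a \<noteq> 0"
    proof
      assume "a = 0"
      with m p show False by simp
    qed
    have p0: "p > 0" using p(1) prime_gt_0_nat by blast
    have m0: "m > 0" using m less.prems by (metis gr0I mult_0_right)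
    have cop: "coprime (p ^ a) m" using prime_imp_coprime[OF p(1) m(2)] by simp
    have "p ^ a > 1" using \<open>a \<noteq> 0\<close> prime_gt_1_nat[OF p(1)] one_less_power by blast
    then have "m < n" using m m0 by simp
    then have IH: "abundancy (m ^ 2) \<le> abundancy m powr square_exponent"
      using less.IH m0 m less.prems by simp
    have "odd p" using p less.prems by (metis dvd_trans)
    have "abundancy (n ^ 2) = abundancy (p ^ (2 * a)) * abundancy (m ^ 2)"
      using abundancy_mult[of "p ^ (2 * a)" "m ^ 2"] cop m0 p0 m
      by (simp add: power_mult_distrib power_mult[symmetric] mult.commute)
    also have "\<dots> \<le> abundancy (p ^ a) powr square_exponent * abundancy m powr square_exponent"
      using abundancy_prime_power_square_le[OF p(1) \<open>odd p\<close>] IH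
        abundancy_ge_1[of "p ^ (2 * a)"] abundancy_ge_1[of "m ^ 2"] p0 m0
      by (intro mult_mono) auto
    also have "\<dots> = abundancy n powr square_exponent"
      using abundancy_mult[OF cop _ m0] m abundancy_ge_1[of "p ^ a"] abundancy_ge_1[OF m0] p0
      by (simp add: powr_mult)
    finally show ?thesis .
  qed
qed

lemma eulerian_abundancy_square_gt:
  assumes "perfect N" and "eulerian_form N q k n"
  shows "abundancy (n ^ 2) > 8/5"
proof -
  have N: "N = q ^ k * n ^ 2" "prime q" "q mod 4 = 1" "n > 0" "coprime q n"
    using assms(2) unfolding eulerian_form_def by auto
  have q0: "q > 0" using prime_gt_0_nat[OF N(2)] .
  have "q \<ge> 5" using N(3) prime_gt_1_nat[OF N(2)] by presburger
  then have "real q / (real q - 1) \<le> 5/4" by (simp add: field_simps)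
  then have less: "abundancy (q ^ k) < 5/4"
    using abundancy_prime_power_less[OF N(2), of k] by linarith
  have ge: "abundancy (q ^ k) \<ge> 1" using abundancy_ge_1 q0 by simp
  have "abundancy N = 2"
    using assms(1) unfolding perfect_def abundancy_def by simp
  then have "abundancy (n ^ 2) = 2 / abundancy (q ^ k)"
    using abundancy_mult[of "q ^ k" "n ^ 2"] N q0 ge by (simp add: field_simps)
  also have "\<dots> > 2 / (5/4)"
    using less ge by (intro divide_strict_left_mono) auto
  finally show ?thesis by simp
qed

theorem theorem1:
  fixes N q k n :: nat
  assumes "odd N" and "perfect N" and "eulerian_form N q k n"
  shows "abundancy n > (8/5 :: real) powr (ln (4/3) / ln (13/9))"
proof -
  have n: "n > 0" "odd n"
    using assms(1,3) unfolding eulerian_form_def by auto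
  let ?e = "ln (4/3) / ln (13/9) :: real"
  have "8/5 < abundancy n powr square_exponent"
    using abundancy_square_le[OF n(1,2)] eulerian_abundancy_square_gt[OF assms(2,3)] by simp
  then have "(8/5) powr ?e < (abundancy n powr square_exponent) powr ?e"
    by (intro powr_less_mono2) auto
  also have "\<dots> = abundancy n"
    using abundancy_ge_1[OF n(1)] by (simp add: powr_powr square_exponent_def)
  finally show ?thesis .
qed

end
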